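(* Define $C_1(h)=\binom{4h+2}{h}$, $C_2(h)=\frac{2h+1}{4h+1}\binom{4h+1}{h}$, $C_3(h)=\frac12\binom{4h}{h}$, $C_4(h)=\binom{4h+1}{h}$ (equivalently $C_1(h)=\tfrac12C(2h+1,h+1)$, $C_2(h)=\tfrac12C(2h,h+1)$, $C_3(h)=\tfrac12C(2h,h)$, $C_4(h)=\tfrac12C(2h+1,h)$). Then for any positive integer $h$, \[\sum_{j=0}^hC_3(j)C_3(h-j)=2\sum_{j=0}^{h-1}C_2(j)C_1(h-1-j),\] \[\sum_{j=0}^hC_3(j)C_4(h-j)=\sum_{j=0}^hC_2(j)C_3(h-j)+\sum_{j=0}^{h-1}C_1(j)C_1(h-1-j),\] \[\sum_{j=0}^hC_4(j)C_4(h-j)=2\sum_{j=0}^hC_3(j)C_1(h-j).\]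
   Context: $C(p,q)=\frac{(2p)!(2q)!}{p!(p+q)!q!}$. *)

theory Defs
  imports Complex_Main
begin

definition C1 :: "nat \<Rightarrow> real" where
  "C1 h = real ((4*h+2) choose h)"

definition C2 :: "nat \<Rightarrow> real" where
  "C2 h = (2 * real h + 1) / (4 * real h + 1) * real ((4*h+1) choose h)"

definition C3 :: "nat \<Rightarrow> real" where
  "C3 h = (1/2) * real ((4*h) choose h)"

definition C4 :: "nat \<Rightarrow> real" where
  "C4 h = real ((4*h+1) choose h)"

end

theory Submission
  imports Defs
begin

(*
  Put a_r(k) = binom(4k + r - 1, k). Then C1 = a_3, C3 = a_1 / 2, C4 = a_2, and
  C2(k) = a_1(k) - a_5(k - 1) for k > 0. Pascal's rule reads
  a_(r+1)(k+1) = a_r(k+1) + a_(r+4)(k), and by induction it shows that the convolution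
  F_(r,s)(n) = sum_k a_r(k) a_s(n - k) depends only on r + s. Each of the three identities
  thereby becomes a linear relation between the numbers F_(0,m)(n), which follows from the same
  recurrence together with the absorption identity 4 a_0(k) = 3 a_1(k) for k > 0.
  Everything except the formulas for the C_i works for an arbitrary step t > 0 in place of 4.
*)

(* The offset r - 1 is what makes tconv depend on r + s only; for t > 0 the truncated
   subtraction at r = 0 still yields the correct value binom(tk - 1, k). *)
definition tbinom :: "nat \<Rightarrow> nat \<Rightarrow> nat \<Rightarrow> nat" where
  "tbinom t r k = (t * k + r - 1) choose k"

definition tconv :: "nat \<Rightarrow> nat \<Rightarrow> nat \<Rightarrow> nat \<Rightarrow> nat" where
  "tconv t r s n = (\<Sum>k=0..n. tbinom t r k * tbinom t s (n - k))"

lemma of_nat_tconv: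
  "(\<Sum>k=0..n. of_nat (tbinom t r k) * of_nat (tbinom t s (n - k))) = (of_nat (tconv t r s n) :: 'a::semiring_1)"
  by (simp add: tconv_def)

lemma tbinom_0 [simp]: "tbinom t r 0 = 1"
  by (simp add: tbinom_def)

lemma tbinom_Suc_Suc:
  assumes "0 < t"
  shows "tbinom t (Suc r) (Suc k) = tbinom t r (Suc k) + tbinom t (r + t) k"
proof -
  define m where "m = t * Suc k + r - 1"
  have "t * Suc k + Suc r - 1 = Suc m" and "t * k + (r + t) - 1 = m"
    using assms by (simp_all add: m_def)
  then show ?thesis
    unfolding tbinom_def m_def[symmetric] by simp
qed

lemma tbinom_absorb: "t * tbinom t 0 (Suc k) = (t - 1) * tbinom t 1 (Suc k)"
proof -
  let ?n = "t * Suc k"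
  have "(t - 1) * Suc k * (?n choose Suc k) = t * Suc k * ((?n - 1) choose Suc k)"
    using binomial_absorb_comp[of ?n "Suc k"] by (simp only: diff_mult_distrib mult_1)
  then have "Suc k * ((t - 1) * (?n choose Suc k)) = Suc k * (t * ((?n - 1) choose Suc k))"
    by (simp only: ac_simps)
  then have "(t - 1) * (?n choose Suc k) = t * ((?n - 1) choose Suc k)"
    by (metis mult_left_cancel nat.distinct(1))
  then show ?thesis
    by (simp add: tbinom_def)
qed

lemma tconv_commute: "tconv t r s n = tconv t s r n"
  unfolding tconv_def by (subst sum.atLeastAtMost_rev) (simp add: mult.commute)

lemma tconv_Suc:
  "tconv t r s (Suc n) = tbinom t s (Suc n) + (\<Sum>k=0..n. tbinom t r (Suc k) * tbinom t s (n - k))"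
  unfolding tconv_def by (subst sum.atLeast0_atMost_Suc_shift) simp

lemma tconv_Suc_Suc:
  assumes "0 < t"
  shows "tconv t (Suc r) s (Suc n) = tconv t r s (Suc n) + tconv t (r + t) s n"
  unfolding tconv_Suc using assms by (simp add: tbinom_Suc_Suc tconv_def sum.distrib distrib_right)

lemma tconv_eq_tconv_0:
  assumes "0 < t"
  shows "tconv t r s n = tconv t 0 (r + s) n"
proof (induction n arbitrary: r s)
  case 0
  then show ?case by (simp add: tconv_def)
next
  case (Suc n)
  \<comment> \<open>the induction hypothesis makes the Pascal step symmetric in r and s\<close>
  have shift: "tconv t (Suc r) s (Suc n) = tconv t r (Suc s) (Suc n)" for r s
  proof -
    have "tconv t (r + t) s n = tconv t r (s + t) n"
      using Suc.IH by (metis add.assoc add.commute)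
    then show ?thesis
      using assms tconv_Suc_Suc tconv_commute by metis
  qed
  show ?case
  proof (induction r arbitrary: s)
    case (Suc r)
    then show ?case by (simp add: shift)
  qed simp
qed

lemma tconv_0_Suc_Suc:
  assumes "0 < t"
  shows "tconv t 0 (Suc m) (Suc n) = tconv t 0 m (Suc n) + tconv t 0 (m + t) n"
proof -
  have "tconv t 0 (Suc m) (Suc n) = tconv t (Suc 0) m (Suc n)"
    using tconv_eq_tconv_0[OF assms, of "Suc 0" m] by simp
  also have "\<dots> = tconv t 0 m (Suc n) + tconv t t m n"
    using tconv_Suc_Suc[OF assms, of 0] by simp
  also have "tconv t t m n = tconv t 0 (m + t) n"
    using tconv_eq_tconv_0[OF assms, of t m n] by (simp add: add.commute)
  finally show ?thesis .
qed

lemma tconv_absorb: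
  assumes "0 < t"
  shows "t * tconv t 0 s n = (t - 1) * tconv t 1 s n + tbinom t s n"
proof (cases n)
  case 0
  then show ?thesis using assms by (simp add: tconv_def)
next
  case (Suc p)
  have "t * (\<Sum>k=0..p. tbinom t 0 (Suc k) * tbinom t s (p - k))
      = (t - 1) * (\<Sum>k=0..p. tbinom t 1 (Suc k) * tbinom t s (p - k))"
    by (simp add: sum_distrib_left mult.assoc[symmetric] tbinom_absorb)
  then show ?thesis
    using Suc assms by (cases t) (simp_all add: tconv_Suc algebra_simps)
qed

lemma tconv_0_quadratic:
  assumes "0 < t" and "0 < n"
  shows "t\<^sup>2 * tconv t 0 0 n + (t - 1)\<^sup>2 * tconv t 0 2 n = 2 * t * (t - 1) * tconv t 0 1 n"
proof -
  define u where "u = t - 1"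
  let ?F0 = "tconv t 0 0 n" and ?F1 = "tconv t 0 1 n" and ?F2 = "tconv t 0 2 n"
  have absorb0: "t * ?F0 = u * ?F1 + tbinom t 0 n"
    using tconv_absorb[OF assms(1), of 0 n] tconv_eq_tconv_0[OF assms(1), of 1 0 n] by (simp add: u_def)
  have absorb1: "t * ?F1 = u * ?F2 + tbinom t 1 n"
    using tconv_absorb[OF assms(1), of 1 n] tconv_eq_tconv_0[OF assms(1), of 1 1 n]
    by (simp add: u_def numeral_2_eq_2)
  have absorb: "t * tbinom t 0 n = u * tbinom t 1 n"
    using assms(2) tbinom_absorb by (cases n) (simp_all add: u_def)
  have "t\<^sup>2 * ?F0 + u\<^sup>2 * ?F2 = t * (t * ?F0) + u * (u * ?F2)"
    by (simp add: power2_eq_square)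
  also have "\<dots> = t * (u * ?F1) + u * (u * ?F2 + tbinom t 1 n)"
    unfolding absorb0 by (simp add: distrib_left absorb mult.assoc)
  also have "\<dots> = 2 * t * u * ?F1"
    unfolding absorb1[symmetric] by simp
  finally show ?thesis
    unfolding u_def .
qed

lemma C1_eq_tbinom: "C1 j = real (tbinom 4 3 j)"
  by (simp add: C1_def tbinom_def)

lemma C3_eq_tbinom: "C3 j = real (tbinom 4 1 j) / 2"
  by (simp add: C3_def tbinom_def)

lemma C4_eq_tbinom: "C4 j = real (tbinom 4 2 j)"
  by (simp add: C4_def tbinom_def)

lemma C2_0: "C2 0 = 1"
  by (simp add: C2_def)

lemma C2_Suc: "C2 (Suc k) = real (tbinom 4 1 (Suc k)) - real (tbinom 4 5 k)"
proof -
  let ?j = "Suc k"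
  define B where "B = real ((4 * ?j) choose ?j)"
  define A where "A = real ((4 * ?j) choose k)"
  have "?j * ((4 * ?j) choose ?j) = 4 * ?j * ((4 * ?j - 1) choose k)"
    by (rule binomial_absorption)
  also have "\<dots> = (4 * ?j - k) * ((4 * ?j) choose k)"
    by (rule binomial_absorb_comp[symmetric])
  also have "4 * ?j - k = 3 * ?j + 1"
    by simp
  finally have ratio: "real ?j * B = (3 * real ?j + 1) * A"
    unfolding A_def B_def by (metis of_nat_1 of_nat_add of_nat_mult of_nat_numeral)
  have "real ((4 * ?j + 1) choose ?j) = B + A"
    using binomial_Suc_Suc[of "4 * ?j" k] by (simp add: A_def B_def)
  then have "C2 ?j = (2 * real ?j + 1) / (4 * real ?j + 1) * (B + A)"
    by (simp only: C2_def)
  also have "\<dots> = B - A"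
    using ratio by (simp add: field_simps)
  finally show ?thesis
    by (simp add: A_def B_def tbinom_def)
qed

lemma sum_C2_tbinom:
  "(\<Sum>j=0..Suc m. C2 j * real (tbinom 4 s (Suc m - j)))
     = real (tconv 4 1 s (Suc m)) - real (tconv 4 5 s m)"
proof -
  have "(\<Sum>j=0..Suc m. C2 j * real (tbinom 4 s (Suc m - j)))
      = real (tbinom 4 s (Suc m)) + (\<Sum>j=0..m. real (tbinom 4 1 (Suc j)) * real (tbinom 4 s (m - j)))
        - (\<Sum>j=0..m. real (tbinom 4 5 j) * real (tbinom 4 s (m - j)))"
    by (subst sum.atLeast0_atMost_Suc_shift) (simp add: C2_0 C2_Suc left_diff_distrib sum_subtractf)
  also have "\<dots> = real (tconv 4 1 s (Suc m)) - real (tconv 4 5 s m)"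
    unfolding tconv_Suc by (simp add: tconv_def)
  finally show ?thesis .
qed

lemma sum_C3_tbinom: "(\<Sum>j=0..h. C3 j * real (tbinom 4 s (h - j))) = real (tconv 4 1 s h) / 2"
  unfolding C3_eq_tbinom of_nat_tconv[symmetric] by (simp add: sum_divide_distrib)

lemma sum_times_C3:
  "(\<Sum>j=0..h. f j * C3 (h - j)) = (\<Sum>j=0..h. f j * real (tbinom 4 1 (h - j))) / 2"
  unfolding sum_divide_distrib by (rule sum.cong) (simp_all add: C3_eq_tbinom)

lemma C4_C4_convolution: "(\<Sum>j=0..h. C4 j * C4 (h - j)) = 2 * (\<Sum>j=0..h. C3 j * C1 (h - j))"
proof -
  have "(\<Sum>j=0..h. C4 j * C4 (h - j)) = real (tconv 4 2 2 h)"
    by (simp only: C4_eq_tbinom of_nat_tconv)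
  moreover have "(\<Sum>j=0..h. C3 j * C1 (h - j)) = real (tconv 4 1 3 h) / 2"
    by (simp only: C1_eq_tbinom sum_C3_tbinom)
  moreover have "tconv 4 2 2 h = tconv 4 1 3 h"
    using tconv_eq_tconv_0[of 4 2 2 h] tconv_eq_tconv_0[of 4 1 3 h] by simp
  ultimately show ?thesis
    by simp
qed

lemma C3_C4_convolution:
  "(\<Sum>j=0..Suc n. C3 j * C4 (Suc n - j))
     = (\<Sum>j=0..Suc n. C2 j * C3 (Suc n - j)) + (\<Sum>j=0..n. C1 j * C1 (n - j))"
proof -
  define F where "F m h = real (tconv 4 0 m h)" for m h
  have "(\<Sum>j=0..Suc n. C3 j * C4 (Suc n - j)) = real (tconv 4 1 2 (Suc n)) / 2"
    by (simp only: C4_eq_tbinom sum_C3_tbinom)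
  also have "\<dots> = F 3 (Suc n) / 2"
    using tconv_eq_tconv_0[of 4 1 2 "Suc n"] by (simp add: F_def numeral_3_eq_3)
  finally have C3_C4: "(\<Sum>j=0..Suc n. C3 j * C4 (Suc n - j)) = F 3 (Suc n) / 2" .
  have "(\<Sum>j=0..Suc n. C2 j * C3 (Suc n - j)) = (real (tconv 4 1 1 (Suc n)) - real (tconv 4 5 1 n)) / 2"
    by (simp only: sum_times_C3 sum_C2_tbinom)
  also have "\<dots> = (F 2 (Suc n) - F 6 n) / 2"
    using tconv_eq_tconv_0[of 4 1 1 "Suc n"] tconv_eq_tconv_0[of 4 5 1 n]
    by (simp add: F_def numeral_2_eq_2)
  finally have C2_C3: "(\<Sum>j=0..Suc n. C2 j * C3 (Suc n - j)) = (F 2 (Suc n) - F 6 n) / 2" .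
  have C1_C1: "(\<Sum>j=0..n. C1 j * C1 (n - j)) = F 6 n"
    using tconv_eq_tconv_0[of 4 3 3 n] by (simp only: C1_eq_tbinom of_nat_tconv F_def) simp
  have "F 3 (Suc n) = F 2 (Suc n) + F 6 n"
    using tconv_0_Suc_Suc[of 4 2 n] by (simp add: F_def numeral_eq_Suc)
  then show ?thesis
    unfolding C3_C4 C2_C3 C1_C1 by (simp add: field_simps)
qed

lemma C3_C3_convolution:
  "(\<Sum>j=0..Suc n. C3 j * C3 (Suc n - j)) = 2 * (\<Sum>j=0..n. C2 j * C1 (n - j))"
proof (cases n)
  case 0
  then show ?thesis
    by (simp add: C1_def C2_def C3_def)
next
  case (Suc m)
  define F where "F m' h = real (tconv 4 0 m' h)" for m' h
  have "(\<Sum>j=0..Suc n. C3 j * C3 (Suc n - j)) = real (tconv 4 1 1 (Suc n)) / 4"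
    by (simp only: sum_times_C3 sum_C3_tbinom)
  also have "\<dots> = F 2 (Suc n) / 4"
    using tconv_eq_tconv_0[of 4 1 1 "Suc n"] by (simp add: F_def numeral_2_eq_2)
  finally have C3_C3: "(\<Sum>j=0..Suc n. C3 j * C3 (Suc n - j)) = F 2 (Suc n) / 4" .
  have "(\<Sum>j=0..n. C2 j * C1 (n - j)) = real (tconv 4 1 3 n) - real (tconv 4 5 3 m)"
    using sum_C2_tbinom[where m = m and s = 3] Suc by (simp only: C1_eq_tbinom)
  also have "\<dots> = F 4 n - F 8 m"
    using tconv_eq_tconv_0[of 4 1 3 n] tconv_eq_tconv_0[of 4 5 3 m] by (simp add: F_def)
  finally have C2_C1: "(\<Sum>j=0..n. C2 j * C1 (n - j)) = F 4 n - F 8 m" .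
  have "F 1 (Suc n) = F 0 (Suc n) + F 4 n" and "F 2 (Suc n) = F 1 (Suc n) + F 5 n"
    and "F 5 n = F 4 n + F 8 m"
    using tconv_0_Suc_Suc[of 4 0 n] tconv_0_Suc_Suc[of 4 1 n] tconv_0_Suc_Suc[of 4 4 m] Suc
    by (simp_all add: F_def numeral_eq_Suc)
  moreover have "16 * F 0 (Suc n) + 9 * F 2 (Suc n) = 24 * F 1 (Suc n)"
    using tconv_0_quadratic[of 4 "Suc n"] unfolding F_def by (simp flip: of_nat_mult of_nat_add)
  ultimately show ?thesis
    unfolding C3_C3 C2_C1 by (simp add: field_simps)
qed

theorem corollary6p2:
  fixes h :: nat
  assumes "h \<ge> 1"
  shows "(\<Sum>j=0..h. C3 j * C3 (h-j)) = 2 * (\<Sum>j=0..h-1. C2 j * C1 (h-1-j)) \<and>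
         (\<Sum>j=0..h. C3 j * C4 (h-j)) =
           (\<Sum>j=0..h. C2 j * C3 (h-j)) + (\<Sum>j=0..h-1. C1 j * C1 (h-1-j)) \<and>
         (\<Sum>j=0..h. C4 j * C4 (h-j)) = 2 * (\<Sum>j=0..h. C3 j * C1 (h-j))"
proof -
  obtain n where "h = Suc n"
    using assms by (cases h) auto
  then show ?thesis
    using C3_C3_convolution[of n] C3_C4_convolution[of n] C4_C4_convolution[of h] by simp
qed

end
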